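(* Let $G$ be a simple connected graph with $n$ vertices and $m$ edges, with maximum degree $\Delta$. Let $k=\left\lceil \frac{2m-n+1}{\Delta}\right\rceil$. Then $\rho_{ABC}(G)\le \sqrt{\Delta+k-2}$.
   Context: For a simple connected graph $G$ with vertex set $\{v_1,\dots,v_n\}$ and degrees $d_i$, the ABC matrix is $M(G)=(m_{ij})_{n\times n}$ with $m_{ij}=\sqrt{(d_i+d_j-2)/(d_id_j)}$ if $v_iv_j$ is an edge and $m_{ij}=0$ otherwise. The ABC spectral radius $\rho_{ABC}(G)$ is the largest eigenvalue of $M(G)$. *)

theory Defs
  imports Complex_Main
begin

definition simple_graph :: "'a set \<Rightarrow> ('a \<Rightarrow> 'a \<Rightarrow> bool) \<Rightarrow> bool" where
  "simple_graph V E \<longleftrightarrow> finite V \<and> V \<noteq> {} \<and>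
     (\<forall>u v. E u v \<longrightarrow> u \<in> V \<and> v \<in> V) \<and>
     (\<forall>u v. E u v \<longrightarrow> E v u) \<and> (\<forall>u. \<not> E u u)"

definition connected_graph :: "'a set \<Rightarrow> ('a \<Rightarrow> 'a \<Rightarrow> bool) \<Rightarrow> bool" where
  "connected_graph V E \<longleftrightarrow> (\<forall>u\<in>V. \<forall>v\<in>V. E\<^sup>*\<^sup>* u v)"

definition degree :: "'a set \<Rightarrow> ('a \<Rightarrow> 'a \<Rightarrow> bool) \<Rightarrow> 'a \<Rightarrow> nat" where
  "degree V E v = card {u \<in> V. E v u}"

definition num_edges :: "('a \<Rightarrow> 'a \<Rightarrow> bool) \<Rightarrow> nat" where
  "num_edges E = card {{u, v} | u v. E u v}"

definition max_degree :: "'a set \<Rightarrow> ('a \<Rightarrow> 'a \<Rightarrow> bool) \<Rightarrow> nat" where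
  "max_degree V E = Max (degree V E ` V)"

definition abc_matrix :: "'a set \<Rightarrow> ('a \<Rightarrow> 'a \<Rightarrow> bool) \<Rightarrow> 'a \<Rightarrow> 'a \<Rightarrow> real" where
  "abc_matrix V E u v =
     (if E u v then sqrt ((real (degree V E u) + real (degree V E v) - 2) /
                          (real (degree V E u) * real (degree V E v)))
      else 0)"

definition is_eigenvalue :: "'a set \<Rightarrow> ('a \<Rightarrow> 'a \<Rightarrow> real) \<Rightarrow> real \<Rightarrow> bool" where
  "is_eigenvalue V M mu \<longleftrightarrow>
     (\<exists>x :: 'a \<Rightarrow> real. (\<exists>v\<in>V. x v \<noteq> 0) \<and>
        (\<forall>u\<in>V. (\<Sum>w\<in>V. M u w * x w) = mu * x u))"

definition abc_spectral_radius :: "'a set \<Rightarrow> ('a \<Rightarrow> 'a \<Rightarrow> bool) \<Rightarrow> real" where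
  "abc_spectral_radius V E = Max {mu. is_eigenvalue V (abc_matrix V E) mu}"

end

theory Submission
  imports Defs "HOL-Analysis.Function_Topology" "HOL-Analysis.L2_Norm" "HOL-Library.Function_Algebras"
begin

text \<open>Let \<open>x\<close> be an eigenvector of the ABC matrix \<open>m\<close> for the eigenvalue \<open>mu\<close>, and let \<open>d\<close>
  be the degree function. Cauchy--Schwarz applied to \<open>mu |x|\<^sup>2 \<le> \<Sum>\<^sub>u\<^sub>,\<^sub>v m(u,v) |x u| |x v|\<close>, with
  each term split as \<open>(m(u,v) sqrt (d v) |x u|) (|x v| / sqrt (d v))\<close>, gives
  \<open>mu\<^sup>2 \<le> max\<^sub>u \<Sum>\<^sub>v m(u,v)\<^sup>2 d v = max\<^sub>u (d u - 2 + t u / d u)\<close>, where \<open>t u\<close> is the degree sum of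
  the neighbours of \<open>u\<close>. Every vertex other than \<open>u\<close> and its neighbours has degree at least
  one, so \<open>t u \<le> 2m - n + 1\<close>; together with \<open>t u \<le> \<Delta> d u\<close> and \<open>d u \<le> \<Delta>\<close> this yields
  \<open>d u + t u / d u \<le> \<Delta> + (2m - n + 1) / \<Delta>\<close>.
  Since the spectral radius is the maximum of the set of eigenvalues, that set has to be shown
  finite (eigenvectors for distinct eigenvalues are orthogonal) and nonempty (a maximiser of the
  quadratic form on the unit sphere is an eigenvector).\<close>

section \<open>Eigenvalues of real symmetric matrices\<close>

definition is_eigenvector :: "'a set \<Rightarrow> ('a \<Rightarrow> 'a \<Rightarrow> real) \<Rightarrow> real \<Rightarrow> ('a \<Rightarrow> real) \<Rightarrow> bool" where
  "is_eigenvector V M mu x \<longleftrightarrow>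
     (\<exists>v\<in>V. x v \<noteq> 0) \<and> (\<forall>u\<in>V. (\<Sum>w\<in>V. M u w * x w) = mu * x u)"

lemma is_eigenvalue_iff_eigenvector: "is_eigenvalue V M mu \<longleftrightarrow> (\<exists>x. is_eigenvector V M mu x)"
  unfolding is_eigenvalue_def is_eigenvector_def ..

lemma is_eigenvector_cong:
  assumes "\<And>v. v \<in> V \<Longrightarrow> x v = y v"
  shows "is_eigenvector V M mu x \<longleftrightarrow> is_eigenvector V M mu y"
proof -
  have "(\<Sum>w\<in>V. M u w * x w) = (\<Sum>w\<in>V. M u w * y w)" for u
    using assms by (intro sum.cong) auto
  then show ?thesis
    using assms unfolding is_eigenvector_def by auto
qed

lemma sum_fun_apply: "(\<Sum>f\<in>T. g f) v = (\<Sum>f\<in>T. g f v)"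
  for g :: "'b \<Rightarrow> 'a \<Rightarrow> real"
  by (induction T rule: infinite_finite_induct) auto

lemma sum_squares_pos:
  fixes x :: "'a \<Rightarrow> real"
  assumes "finite V" and "\<exists>v\<in>V. x v \<noteq> 0"
  shows "0 < (\<Sum>v\<in>V. x v * x v)"
proof -
  obtain v where "v \<in> V" "x v \<noteq> 0"
    using assms(2) by blast
  moreover have "0 < x v * x v"
    using \<open>x v \<noteq> 0\<close> not_real_square_gt_zero by blast
  ultimately show ?thesis
    using assms(1) by (intro sum_pos2[of V v]) auto
qed

lemma symmetric_bilinear_swap:
  fixes M :: "'a \<Rightarrow> 'a \<Rightarrow> real"
  assumes sym: "\<And>u w. u \<in> V \<Longrightarrow> w \<in> V \<Longrightarrow> M u w = M w u"
  shows "(\<Sum>u\<in>V. x u * (\<Sum>w\<in>V. M u w * y w)) = (\<Sum>u\<in>V. y u * (\<Sum>w\<in>V. M u w * x w))"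
proof -
  have "(\<Sum>u\<in>V. x u * (\<Sum>w\<in>V. M u w * y w)) = (\<Sum>u\<in>V. \<Sum>w\<in>V. x u * M u w * y w)"
    by (simp add: sum_distrib_left mult.assoc)
  also have "\<dots> = (\<Sum>w\<in>V. \<Sum>u\<in>V. x u * M u w * y w)"
    by (rule sum.swap)
  also have "\<dots> = (\<Sum>w\<in>V. \<Sum>u\<in>V. y w * M w u * x u)"
    using sym by (intro sum.cong refl) (auto simp: mult_ac)
  also have "\<dots> = (\<Sum>u\<in>V. y u * (\<Sum>w\<in>V. M u w * x w))"
    by (simp add: sum_distrib_left mult.assoc)
  finally show ?thesis .
qed

lemma eigenvectors_orthogonal:
  fixes M :: "'a \<Rightarrow> 'a \<Rightarrow> real"
  assumes sym: "\<And>u w. u \<in> V \<Longrightarrow> w \<in> V \<Longrightarrow> M u w = M w u"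
    and "is_eigenvector V M mu x" and "is_eigenvector V M nu y" and "mu \<noteq> nu"
  shows "(\<Sum>v\<in>V. x v * y v) = 0"
proof -
  have "(\<Sum>u\<in>V. x u * (\<Sum>w\<in>V. M u w * y w)) = (\<Sum>u\<in>V. y u * (\<Sum>w\<in>V. M u w * x w))"
    using sym by (rule symmetric_bilinear_swap)
  moreover have "(\<Sum>u\<in>V. x u * (\<Sum>w\<in>V. M u w * y w)) = nu * (\<Sum>v\<in>V. x v * y v)"
    using assms(3) by (simp add: is_eigenvector_def sum_distrib_left mult_ac)
  moreover have "(\<Sum>u\<in>V. y u * (\<Sum>w\<in>V. M u w * x w)) = mu * (\<Sum>v\<in>V. x v * y v)"
    using assms(2) by (simp add: is_eigenvector_def sum_distrib_left mult_ac)
  ultimately show ?thesis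
    using \<open>mu \<noteq> nu\<close> by simp
qed

lemma orthogonal_family_finite:
  fixes F :: "('a \<Rightarrow> real) set"
  assumes "finite V"
    and support: "\<And>f v. f \<in> F \<Longrightarrow> v \<notin> V \<Longrightarrow> f v = 0"
    and orthogonal: "\<And>f g. f \<in> F \<Longrightarrow> g \<in> F \<Longrightarrow> f \<noteq> g \<Longrightarrow> (\<Sum>v\<in>V. f v * g v) = 0"
    and nonzero: "\<And>f. f \<in> F \<Longrightarrow> \<exists>v\<in>V. f v \<noteq> 0"
  shows "finite F"
proof -
  interpret fun_space: vector_space "\<lambda>c (f :: 'a \<Rightarrow> real) v. c * f v"
    by unfold_locales (auto simp: fun_eq_iff algebra_simps)
  define \<delta> :: "'a \<Rightarrow> 'a \<Rightarrow> real" where "\<delta> v w = (if w = v then 1 else 0)" for v w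
  have "F \<subseteq> fun_space.span (\<delta> ` V)"
  proof
    fix f assume "f \<in> F"
    have "(\<Sum>v\<in>V. (\<lambda>w. f v * \<delta> v w)) w = f w" for w
    proof -
      have "(\<Sum>v\<in>V. (\<lambda>w. f v * \<delta> v w)) w = (\<Sum>v\<in>V. if v = w then f v else 0)"
        unfolding sum_fun_apply \<delta>_def by (intro sum.cong) auto
      also have "\<dots> = f w"
        using assms(1) support[OF \<open>f \<in> F\<close>, of w] by simp
      finally show ?thesis .
    qed
    then have "f = (\<Sum>v\<in>V. (\<lambda>w. f v * \<delta> v w))"
      by (simp add: fun_eq_iff)
    also have "\<dots> \<in> fun_space.span (\<delta> ` V)"
      by (intro fun_space.span_sum fun_space.span_scale fun_space.span_base) auto
    finally show "f \<in> fun_space.span (\<delta> ` V)" .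
  qed
  moreover have "fun_space.independent F"
    unfolding fun_space.independent_explicit_finite_subsets
  proof (intro allI impI ballI)
    fix T c g
    assume T: "T \<subseteq> F" "finite T" and zero: "(\<Sum>f\<in>T. (\<lambda>v. c f * f v)) = 0" and g: "g \<in> T"
    have "0 = (\<Sum>v\<in>V. (\<Sum>f\<in>T. (\<lambda>v. c f * f v)) v * g v)"
      using zero by simp
    also have "\<dots> = (\<Sum>f\<in>T. c f * (\<Sum>v\<in>V. f v * g v))"
      by (simp add: sum_fun_apply sum_distrib_left sum_distrib_right mult_ac sum.swap[of _ V])
    also have "\<dots> = (\<Sum>f\<in>T. if f = g then c g * (\<Sum>v\<in>V. g v * g v) else 0)"
      using T orthogonal g by (intro sum.cong) auto
    also have "\<dots> = c g * (\<Sum>v\<in>V. g v * g v)"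
      using T(2) g by simp
    finally show "c g = 0"
      using sum_squares_pos[OF assms(1) nonzero[of g]] T g by auto
  qed
  ultimately show ?thesis
    using fun_space.independent_span_bound assms(1) by blast
qed

lemma symmetric_eigenvalues_finite:
  fixes M :: "'a \<Rightarrow> 'a \<Rightarrow> real"
  assumes "finite V" and sym: "\<And>u w. u \<in> V \<Longrightarrow> w \<in> V \<Longrightarrow> M u w = M w u"
  shows "finite {mu. is_eigenvalue V M mu}"
proof -
  define S where "S = {mu. is_eigenvalue V M mu}"
  define eigvec where "eigvec mu = (\<lambda>v. if v \<in> V then (SOME x. is_eigenvector V M mu x) v else 0)"
    for mu
  have eigvec: "is_eigenvector V M mu (eigvec mu)" if "mu \<in> S" for mu
  proof -
    have "\<exists>x. is_eigenvector V M mu x"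
      using that by (simp add: S_def is_eigenvalue_iff_eigenvector)
    then have "is_eigenvector V M mu (SOME x. is_eigenvector V M mu x)"
      by (rule someI_ex)
    then show ?thesis
      by (subst is_eigenvector_cong[of V _ "SOME x. is_eigenvector V M mu x"]) (simp_all add: eigvec_def)
  qed
  have orthogonal: "(\<Sum>v\<in>V. eigvec mu v * eigvec nu v) = 0"
    if "mu \<in> S" "nu \<in> S" "mu \<noteq> nu" for mu nu
    using sym eigvec[OF that(1)] eigvec[OF that(2)] that(3) by (rule eigenvectors_orthogonal)
  have nonzero: "\<exists>v\<in>V. eigvec mu v \<noteq> 0" if "mu \<in> S" for mu
    using eigvec[OF that] by (simp add: is_eigenvector_def)
  have "inj_on eigvec S"
  proof (rule inj_onI, rule ccontr)
    fix mu nu assume "mu \<in> S" "nu \<in> S" "eigvec mu = eigvec nu" "mu \<noteq> nu"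
    then have "(\<Sum>v\<in>V. eigvec mu v * eigvec mu v) = 0"
      using orthogonal[of mu nu] by simp
    then show False
      using sum_squares_pos[OF assms(1) nonzero[OF \<open>mu \<in> S\<close>]] by simp
  qed
  moreover have "finite (eigvec ` S)"
  proof (rule orthogonal_family_finite[OF assms(1)])
    show "\<And>f v. f \<in> eigvec ` S \<Longrightarrow> v \<notin> V \<Longrightarrow> f v = 0"
      by (auto simp: eigvec_def)
    show "\<And>f g. f \<in> eigvec ` S \<Longrightarrow> g \<in> eigvec ` S \<Longrightarrow> f \<noteq> g \<Longrightarrow> (\<Sum>v\<in>V. f v * g v) = 0"
      using orthogonal by blast
    show "\<And>f. f \<in> eigvec ` S \<Longrightarrow> \<exists>v\<in>V. f v \<noteq> 0"
      using nonzero by blast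
  qed
  ultimately show ?thesis
    unfolding S_def using finite_imageD by blast
qed

lemma linear_coeff_zero_if_quadratic_nonpos:
  fixes a b :: real
  assumes "\<And>t. t * a + t\<^sup>2 * b \<le> 0"
  shows "a = 0"
proof (rule ccontr)
  assume "a \<noteq> 0"
  define c where "c = 1 + \<bar>b\<bar>"
  have "c > 0"
    by (simp add: c_def add_pos_nonneg)
  have "0 < a\<^sup>2 / c\<^sup>2"
    using \<open>a \<noteq> 0\<close> \<open>c > 0\<close> by simp
  also have "\<dots> = a\<^sup>2 / c\<^sup>2 * (c - \<bar>b\<bar>)"
    by (simp add: c_def)
  also have "\<dots> = (a / c) * a - (a / c)\<^sup>2 * \<bar>b\<bar>"
    using \<open>c > 0\<close> by (simp add: field_simps power2_eq_square)
  also have "\<dots> \<le> (a / c) * a + (a / c)\<^sup>2 * b"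
    using mult_left_mono[of "- \<bar>b\<bar>" b "(a / c)\<^sup>2"] by simp
  also have "\<dots> \<le> 0"
    by (rule assms)
  finally show False
    by simp
qed

lemma symmetric_quadratic_form_add:
  fixes M :: "'a \<Rightarrow> 'a \<Rightarrow> real"
  assumes sym: "\<And>u w. u \<in> V \<Longrightarrow> w \<in> V \<Longrightarrow> M u w = M w u"
  shows "(\<Sum>u\<in>V. \<Sum>w\<in>V. M u w * (x u + t * y u) * (x w + t * y w)) =
    (\<Sum>u\<in>V. \<Sum>w\<in>V. M u w * x u * x w) + 2 * t * (\<Sum>u\<in>V. y u * (\<Sum>w\<in>V. M u w * x w))
     + t\<^sup>2 * (\<Sum>u\<in>V. \<Sum>w\<in>V. M u w * y u * y w)"
proof -
  have expand: "M u w * (x u + t * y u) * (x w + t * y w) = M u w * x u * x w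
     + t * (x u * (M u w * y w)) + t * (y u * (M u w * x w)) + t\<^sup>2 * (M u w * y u * y w)" for u w
    by (simp add: algebra_simps power2_eq_square)
  have swap: "(\<Sum>u\<in>V. x u * (\<Sum>w\<in>V. M u w * y w)) = (\<Sum>u\<in>V. y u * (\<Sum>w\<in>V. M u w * x w))"
    using sym by (rule symmetric_bilinear_swap)
  show ?thesis
    unfolding expand sum.distrib sum_distrib_left[symmetric] swap
    by (simp add: algebra_simps)
qed

text \<open>The defect \<open>z\<^sup>T M z - mu |z|\<^sup>2\<close> is nonpositive and vanishes at \<open>x\<close>; along
  \<open>x + t r\<close>, with \<open>r = M x - mu x\<close>, it equals \<open>2 t |r|\<^sup>2 + O(t\<^sup>2)\<close>, which forces \<open>r = 0\<close>.\<close>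
lemma rayleigh_maximizer_is_eigenvector:
  fixes M :: "'a \<Rightarrow> 'a \<Rightarrow> real"
  assumes "finite V" and sym: "\<And>u w. u \<in> V \<Longrightarrow> w \<in> V \<Longrightarrow> M u w = M w u"
    and bound: "\<And>z. (\<Sum>u\<in>V. \<Sum>w\<in>V. M u w * z u * z w) \<le> mu * (\<Sum>v\<in>V. z v * z v)"
    and attained: "(\<Sum>u\<in>V. \<Sum>w\<in>V. M u w * x u * x w) = mu * (\<Sum>v\<in>V. x v * x v)"
  shows "\<forall>u\<in>V. (\<Sum>w\<in>V. M u w * x w) = mu * x u"
proof -
  define r where "r u = (\<Sum>w\<in>V. M u w * x w) - mu * x u" for u
  define defect where
    "defect z = (\<Sum>u\<in>V. \<Sum>w\<in>V. M u w * z u * z w) - mu * (\<Sum>v\<in>V. z v * z v)" for z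
  have residual: "(\<Sum>u\<in>V. r u * r u)
      = (\<Sum>u\<in>V. r u * (\<Sum>w\<in>V. M u w * x w)) - mu * (\<Sum>u\<in>V. r u * x u)"
  proof -
    have "(\<Sum>u\<in>V. r u * r u) = (\<Sum>u\<in>V. r u * ((\<Sum>w\<in>V. M u w * x w) - mu * x u))"
      by (simp add: r_def)
    then show ?thesis
      by (simp add: right_diff_distrib sum_subtractf sum_distrib_left mult_ac)
  qed
  have norm_add: "(\<Sum>v\<in>V. (x v + t * r v) * (x v + t * r v))
      = (\<Sum>v\<in>V. x v * x v) + 2 * t * (\<Sum>u\<in>V. r u * x u) + t\<^sup>2 * (\<Sum>v\<in>V. r v * r v)" for t
    by (simp add: algebra_simps power2_eq_square sum.distrib sum_distrib_left)
  have "defect (\<lambda>u. x u + t * r u) = t * (2 * (\<Sum>u\<in>V. r u * r u)) + t\<^sup>2 * defect r" for t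
  proof -
    have "(\<Sum>u\<in>V. \<Sum>w\<in>V. M u w * (x u + t * r u) * (x w + t * r w))
        = (\<Sum>u\<in>V. \<Sum>w\<in>V. M u w * x u * x w) + 2 * t * (\<Sum>u\<in>V. r u * (\<Sum>w\<in>V. M u w * x w))
          + t\<^sup>2 * (\<Sum>u\<in>V. \<Sum>w\<in>V. M u w * r u * r w)"
      using sym by (rule symmetric_quadratic_form_add)
    then show ?thesis
      unfolding defect_def norm_add residual attained by (simp add: algebra_simps)
  qed
  moreover have "defect z \<le> 0" for z
    using bound[of z] by (simp add: defect_def)
  ultimately have "2 * (\<Sum>u\<in>V. r u * r u) = 0"
    by (intro linear_coeff_zero_if_quadratic_nonpos[where b = "defect r"]) metis
  then have "\<forall>u\<in>V. r u = 0"
    using \<open>finite V\<close> by (simp add: sum_nonneg_eq_0_iff)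
  then show ?thesis
    by (simp add: r_def)
qed

lemma quadratic_form_le_of_unit_bound:
  fixes M :: "'a \<Rightarrow> 'a \<Rightarrow> real"
  assumes "finite V"
    and unit_bound: "\<And>y. (\<Sum>v\<in>V. y v * y v) = 1 \<Longrightarrow> (\<Sum>u\<in>V. \<Sum>w\<in>V. M u w * y u * y w) \<le> c"
  shows "(\<Sum>u\<in>V. \<Sum>w\<in>V. M u w * z u * z w) \<le> c * (\<Sum>v\<in>V. z v * z v)"
proof -
  define Q where "Q z = (\<Sum>u\<in>V. \<Sum>w\<in>V. M u w * z u * z w)" for z :: "'a \<Rightarrow> real"
  define N where "N z = (\<Sum>v\<in>V. z v * z v)" for z :: "'a \<Rightarrow> real"
  have "Q z \<le> c * N z"
  proof (cases "N z = 0")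
    case True
    then have "\<forall>v\<in>V. z v = 0"
      using assms(1) by (simp add: N_def sum_nonneg_eq_0_iff)
    then show ?thesis
      using True by (simp add: Q_def)
  next
    case False
    moreover have "N z \<ge> 0"
      unfolding N_def by (intro sum_nonneg) simp
    ultimately have "N z > 0"
      by simp
    define s where "s = sqrt (N z)"
    have s_sq: "s * s = N z"
      using \<open>N z > 0\<close> by (simp add: s_def)
    have "N (\<lambda>v. z v / s) = 1"
      using s_sq \<open>N z > 0\<close> by (simp add: N_def sum_divide_distrib[symmetric])
    then have "Q (\<lambda>v. z v / s) \<le> c"
      unfolding Q_def N_def by (rule unit_bound)
    moreover have "Q (\<lambda>v. z v / s) = Q z / N z"
      by (simp add: Q_def s_sq[symmetric] sum_divide_distrib mult.assoc)
    ultimately show ?thesis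
      using \<open>N z > 0\<close> by (simp add: divide_le_eq mult.commute)
  qed
  then show ?thesis
    by (simp add: Q_def N_def)
qed

lemma quadratic_form_attains_max_on_sphere:
  fixes M :: "'a \<Rightarrow> 'a \<Rightarrow> real"
  assumes "finite V" and "V \<noteq> {}"
  obtains x where "(\<Sum>v\<in>V. x v * x v) = 1"
    and "\<And>y. (\<Sum>v\<in>V. y v * y v) = 1 \<Longrightarrow>
          (\<Sum>u\<in>V. \<Sum>w\<in>V. M u w * y u * y w) \<le> (\<Sum>u\<in>V. \<Sum>w\<in>V. M u w * x u * x w)"
proof -
  define Q where "Q z = (\<Sum>u\<in>V. \<Sum>w\<in>V. M u w * z u * z w)" for z :: "'a \<Rightarrow> real"
  define N where "N z = (\<Sum>v\<in>V. z v * z v)" for z :: "'a \<Rightarrow> real"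
  define cube where "cube = PiE UNIV (\<lambda>v. if v \<in> V then {-1..1} else {0 :: real})"
  define K where "K = cube \<inter> {z. N z = 1}"
  have "compactin (product_topology (\<lambda>_. euclidean) UNIV) cube"
    unfolding cube_def compactin_PiE by auto
  then have "compact cube"
    by (simp add: euclidean_product_topology)
  moreover have "closed {z. N z = 1}"
    unfolding N_def by (intro closed_Collect_eq continuous_intros continuous_on_product_coordinates)
  ultimately have "compact K"
    unfolding K_def by blast
  obtain v0 where "v0 \<in> V"
    using assms(2) by blast
  define e where "e v = (if v = v0 then 1 else 0 :: real)" for v
  have "N e = (\<Sum>v\<in>V. if v = v0 then 1 else 0)"
    unfolding N_def by (rule sum.cong) (auto simp: e_def)
  then have "e \<in> K"
    using assms(1) \<open>v0 \<in> V\<close> by (auto simp: K_def cube_def e_def)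
  moreover have "continuous_on K Q"
    unfolding Q_def
    by (intro continuous_intros continuous_on_subset[OF continuous_on_product_coordinates]) simp_all
  ultimately obtain x where "x \<in> K" and x_max: "\<And>y. y \<in> K \<Longrightarrow> Q y \<le> Q x"
    using continuous_attains_sup[OF \<open>compact K\<close>] by blast
  have "Q y \<le> Q x" if "N y = 1" for y
  proof -
    define y' where "y' v = (if v \<in> V then y v else 0)" for v
    have "y v \<in> {-1..1}" if "v \<in> V" for v
    proof -
      have "(y v)\<^sup>2 \<le> N y"
        unfolding N_def power2_eq_square using assms(1) that by (intro member_le_sum) auto
      then show ?thesis
        using \<open>N y = 1\<close> by (simp add: abs_le_iff abs_square_le_1)
    qed
    moreover have "N y' = N y" and "Q y' = Q y"
      by (simp_all add: N_def Q_def y'_def)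
    ultimately have "y' \<in> K"
      using \<open>N y = 1\<close> by (auto simp: K_def cube_def y'_def)
    then show ?thesis
      using x_max \<open>Q y' = Q y\<close> by fastforce
  qed
  moreover have "N x = 1"
    using \<open>x \<in> K\<close> by (simp add: K_def)
  ultimately show ?thesis
    using that unfolding Q_def N_def by blast
qed

lemma symmetric_eigenvalue_exists:
  fixes M :: "'a \<Rightarrow> 'a \<Rightarrow> real"
  assumes "finite V" and "V \<noteq> {}" and sym: "\<And>u w. u \<in> V \<Longrightarrow> w \<in> V \<Longrightarrow> M u w = M w u"
  shows "\<exists>mu. is_eigenvalue V M mu"
proof -
  obtain x where x_unit: "(\<Sum>v\<in>V. x v * x v) = 1"
    and x_max: "\<And>y. (\<Sum>v\<in>V. y v * y v) = 1 \<Longrightarrow>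
          (\<Sum>u\<in>V. \<Sum>w\<in>V. M u w * y u * y w) \<le> (\<Sum>u\<in>V. \<Sum>w\<in>V. M u w * x u * x w)"
    using quadratic_form_attains_max_on_sphere[OF assms(1,2)] by blast
  define mu where "mu = (\<Sum>u\<in>V. \<Sum>w\<in>V. M u w * x u * x w)"
  have "\<And>z. (\<Sum>u\<in>V. \<Sum>w\<in>V. M u w * z u * z w) \<le> mu * (\<Sum>v\<in>V. z v * z v)"
    unfolding mu_def using assms(1) x_max by (rule quadratic_form_le_of_unit_bound)
  moreover have "(\<Sum>u\<in>V. \<Sum>w\<in>V. M u w * x u * x w) = mu * (\<Sum>v\<in>V. x v * x v)"
    by (simp add: mu_def x_unit)
  ultimately have "\<forall>u\<in>V. (\<Sum>w\<in>V. M u w * x w) = mu * x u"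
    using assms(1) sym by (intro rayleigh_maximizer_is_eigenvector)
  moreover have "\<exists>v\<in>V. x v \<noteq> 0"
    using x_unit by (metis (no_types, lifting) sum.neutral mult_zero_left zero_neq_one)
  ultimately show ?thesis
    unfolding is_eigenvalue_iff_eigenvector is_eigenvector_def by blast
qed

lemma eigenvalue_le_sqrt_weighted_row_bound:
  fixes M :: "'a \<Rightarrow> 'a \<Rightarrow> real" and d :: "'a \<Rightarrow> real"
  assumes "finite V"
    and M_nonneg: "\<And>u w. u \<in> V \<Longrightarrow> w \<in> V \<Longrightarrow> 0 \<le> M u w"
    and d_pos: "\<And>w. w \<in> V \<Longrightarrow> 0 < d w"
    and d_ge_support: "\<And>w. w \<in> V \<Longrightarrow> real (card {u \<in> V. M u w \<noteq> 0}) \<le> d w"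
    and row_bound: "\<And>u. u \<in> V \<Longrightarrow> (\<Sum>w\<in>V. (M u w)\<^sup>2 * d w) \<le> C"
    and "is_eigenvalue V M mu"
  shows "mu \<le> sqrt C"
proof -
  obtain x where x: "is_eigenvector V M mu x"
    using assms(6) by (auto simp: is_eigenvalue_iff_eigenvector)
  define S where "S = (\<Sum>v\<in>V. x v * x v)"
  have "S > 0"
    using sum_squares_pos[OF assms(1)] x by (simp add: S_def is_eigenvector_def)
  have sum_pairs: "(\<Sum>p\<in>V \<times> V. h p) = (\<Sum>u\<in>V. \<Sum>w\<in>V. h (u, w))" for h :: "'a \<times> 'a \<Rightarrow> real"
    by (simp add: sum.cartesian_product)
  define f where "f = (\<lambda>(u, w). M u w * sqrt (d w) * x u)"
  define g where "g = (\<lambda>(u, w). if M u w \<noteq> 0 then x w / sqrt (d w) else 0)"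
  have f_bound: "L2_set f (V \<times> V) \<le> sqrt (C * S)"
  proof -
    have "(\<Sum>p\<in>V \<times> V. (f p)\<^sup>2) = (\<Sum>u\<in>V. x u * x u * (\<Sum>w\<in>V. (M u w)\<^sup>2 * d w))"
      unfolding sum_pairs sum_distrib_left f_def
      using d_pos by (intro sum.cong refl) (simp add: power_mult_distrib power2_eq_square abs_of_pos)
    also have "\<dots> \<le> (\<Sum>u\<in>V. x u * x u * C)"
      using row_bound by (intro sum_mono mult_left_mono) auto
    also have "\<dots> = C * S"
      by (simp add: S_def sum_distrib_left mult_ac)
    finally show ?thesis
      unfolding L2_set_def by (rule real_sqrt_le_mono)
  qed
  have g_bound: "L2_set g (V \<times> V) \<le> sqrt S"
  proof -
    have "(\<Sum>p\<in>V \<times> V. (g p)\<^sup>2) = (\<Sum>w\<in>V. \<Sum>u\<in>V. if M u w \<noteq> 0 then x w * x w / d w else 0)"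
      unfolding sum_pairs g_def
      using d_pos by (subst sum.swap) (intro sum.cong refl, simp add: power_divide power2_eq_square abs_of_pos)
    also have "\<dots> = (\<Sum>w\<in>V. real (card {u \<in> V. M u w \<noteq> 0}) * (x w * x w / d w))"
      using assms(1) by (simp add: sum.inter_filter[symmetric])
    also have "\<dots> \<le> (\<Sum>w\<in>V. d w * (x w * x w / d w))"
      using d_ge_support by (intro sum_mono mult_right_mono) (auto intro: divide_nonneg_pos d_pos)
    also have "\<dots> = S"
      unfolding S_def using d_pos by (intro sum.cong refl) (simp add: less_imp_neq[symmetric])
    finally show ?thesis
      unfolding L2_set_def by (rule real_sqrt_le_mono)
  qed
  have "mu * S = (\<Sum>u\<in>V. x u * (mu * x u))"
    by (simp add: S_def sum_distrib_left mult_ac)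
  also have "\<dots> = (\<Sum>u\<in>V. x u * (\<Sum>w\<in>V. M u w * x w))"
    using x by (intro sum.cong) (simp_all add: is_eigenvector_def)
  also have "\<dots> = (\<Sum>u\<in>V. \<Sum>w\<in>V. x u * M u w * x w)"
    by (simp add: sum_distrib_left mult.assoc)
  also have "\<dots> \<le> (\<Sum>p\<in>V \<times> V. \<bar>f p\<bar> * \<bar>g p\<bar>)"
    unfolding sum_pairs
  proof (intro sum_mono)
    fix u w assume "u \<in> V" "w \<in> V"
    then have "x u * M u w * x w \<le> M u w * \<bar>x u\<bar> * \<bar>x w\<bar>"
      using M_nonneg[of u w] by (metis abs_ge_self abs_mult abs_of_nonneg mult.commute mult.left_commute)
    also have "\<dots> = \<bar>f (u, w)\<bar> * \<bar>g (u, w)\<bar>"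
      using M_nonneg[of u w] d_pos[of w] \<open>u \<in> V\<close> \<open>w \<in> V\<close>
      by (simp add: f_def g_def abs_mult)
    finally show "x u * M u w * x w \<le> \<bar>f (u, w)\<bar> * \<bar>g (u, w)\<bar>" .
  qed
  also have "\<dots> \<le> L2_set f (V \<times> V) * L2_set g (V \<times> V)"
    by (rule L2_set_mult_ineq)
  also have "\<dots> \<le> sqrt (C * S) * sqrt S"
    by (rule mult_mono[OF f_bound g_bound order_trans[OF L2_set_nonneg f_bound] L2_set_nonneg])
  also have "\<dots> = sqrt C * S"
    using \<open>S > 0\<close> by (simp add: real_sqrt_mult mult.assoc)
  finally show ?thesis
    using \<open>S > 0\<close> by simp
qed

section \<open>Degrees in simple graphs\<close>

lemma degree_pos_if_edge:
  assumes "simple_graph V E" and "E u w"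
  shows "0 < degree V E u"
proof -
  have "finite V" and "w \<in> V"
    using assms by (auto simp: simple_graph_def)
  then show ?thesis
    using \<open>E u w\<close> by (auto simp: degree_def card_gt_0_iff)
qed

lemma connected_degree_pos:
  assumes "simple_graph V E" and "connected_graph V E" and "card V \<ge> 2" and "u \<in> V"
  shows "0 < degree V E u"
proof -
  have "\<not> V \<subseteq> {u}"
    using assms(3) card_mono[of "{u}" V] by auto
  then obtain v where "v \<in> V" and "v \<noteq> u"
    by blast
  then have "E\<^sup>*\<^sup>* u v"
    using assms(2,4) by (simp add: connected_graph_def)
  then obtain w where "E u w"
    using \<open>v \<noteq> u\<close> by (blast elim: converse_rtranclpE)
  with assms(1) show ?thesis
    by (rule degree_pos_if_edge)
qed

lemma degree_le_max_degree:
  assumes "simple_graph V E" and "u \<in> V"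
  shows "degree V E u \<le> max_degree V E"
  using assms unfolding max_degree_def simple_graph_def by (intro Max_ge) auto

lemma sum_degree_eq_twice_num_edges:
  assumes "simple_graph V E"
  shows "(\<Sum>v\<in>V. degree V E v) = 2 * num_edges E"
proof -
  have "finite V" and sym: "\<And>u v. E u v \<Longrightarrow> E v u" and irrefl: "\<And>u. \<not> E u u"
    and in_V: "\<And>u v. E u v \<Longrightarrow> u \<in> V \<and> v \<in> V"
    using assms by (auto simp: simple_graph_def)
  define arcs where "arcs = Sigma V (\<lambda>v. {w \<in> V. E v w})"
  define edges where "edges = {{u, v} | u v. E u v}"
  define ends where "ends = (\<lambda>(u :: 'a, v). {u, v})"
  have "finite arcs"
    unfolding arcs_def using \<open>finite V\<close> by auto
  have "(\<Sum>v\<in>V. degree V E v) = card arcs"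
    unfolding arcs_def degree_def using \<open>finite V\<close> by (simp add: card_SigmaI)
  also have "arcs = (\<Union>e\<in>edges. {p \<in> arcs. ends p = e})"
    unfolding arcs_def edges_def ends_def using in_V by auto
  also have "card \<dots> = (\<Sum>e\<in>edges. card {p \<in> arcs. ends p = e})"
  proof (rule card_UN_disjoint)
    have "edges = ends ` arcs"
      unfolding arcs_def edges_def ends_def using in_V by auto
    then show "finite edges"
      using \<open>finite arcs\<close> by simp
  qed (use \<open>finite arcs\<close> in auto)
  also have "\<dots> = (\<Sum>e\<in>edges. 2)"
  proof (rule sum.cong)
    fix e assume "e \<in> edges"
    then obtain u v where e: "e = {u, v}" and "E u v"
      unfolding edges_def by auto
    then have "{p \<in> arcs. ends p = e} = {(u, v), (v, u)}" and "u \<noteq> v"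
      unfolding arcs_def ends_def using in_V sym irrefl by (auto simp: doubleton_eq_iff)
    then show "card {p \<in> arcs. ends p = e} = 2"
      by simp
  qed simp
  finally show ?thesis
    by (simp add: num_edges_def edges_def)
qed

text \<open>The vertices other than \<open>u\<close> and its neighbours each contribute degree at least one to
  the degree sum \<open>2 m\<close>.\<close>
lemma neighbour_degree_sum_le:
  assumes "simple_graph V E" and "connected_graph V E" and "card V \<ge> 2" and "u \<in> V"
  shows "(\<Sum>w\<in>{w \<in> V. E u w}. degree V E w) + card V \<le> 2 * num_edges E + 1"
proof -
  have "finite V" and irrefl: "\<And>u. \<not> E u u"
    using assms(1) by (auto simp: simple_graph_def)
  define N where "N = {w \<in> V. E u w}"
  define R where "R = {w \<in> V. w \<noteq> u \<and> \<not> E u w}"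
  have V_split: "V = insert u (N \<union> R)" and "u \<notin> N \<union> R" and "N \<inter> R = {}"
    using assms(4) irrefl by (auto simp: N_def R_def)
  have "finite N" and "finite R"
    using \<open>finite V\<close> by (auto simp: N_def R_def)
  have "(\<Sum>w\<in>V. f w) = f u + (\<Sum>w\<in>N. f w) + (\<Sum>w\<in>R. f w)" for f :: "'a \<Rightarrow> nat"
    by (subst V_split, subst sum.insert)
      (use \<open>finite N\<close> \<open>finite R\<close> \<open>u \<notin> N \<union> R\<close> \<open>N \<inter> R = {}\<close> in \<open>auto simp: sum.union_disjoint\<close>)
  then have "2 * num_edges E = degree V E u + (\<Sum>w\<in>N. degree V E w) + (\<Sum>w\<in>R. degree V E w)"
    by (simp add: sum_degree_eq_twice_num_edges[OF assms(1), symmetric])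
  moreover have "card V = 1 + degree V E u + card R"
    by (subst V_split, subst card.insert)
      (use \<open>finite N\<close> \<open>finite R\<close> \<open>u \<notin> N \<union> R\<close> \<open>N \<inter> R = {}\<close> in
        \<open>auto simp: card_Un_disjoint degree_def N_def\<close>)
  moreover have "card R \<le> (\<Sum>w\<in>R. degree V E w)"
  proof -
    have "1 \<le> degree V E w" if "w \<in> R" for w
      using connected_degree_pos[OF assms(1-3), of w] that by (simp add: R_def)
    then have "(\<Sum>w\<in>R. 1) \<le> (\<Sum>w\<in>R. degree V E w)"
      by (rule sum_mono)
    then show ?thesis
      by simp
  qed
  ultimately show ?thesis
    unfolding N_def by linarith
qed

section \<open>The ABC matrix\<close>

lemma abc_matrix_symmetric:
  assumes "simple_graph V E"
  shows "abc_matrix V E u w = abc_matrix V E w u"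
  using assms unfolding abc_matrix_def simple_graph_def by (auto simp: add.commute mult.commute)

lemma abc_matrix_nonneg:
  assumes "simple_graph V E"
  shows "0 \<le> abc_matrix V E u w"
proof (cases "E u w")
  case True
  then have "E w u"
    using assms by (simp add: simple_graph_def)
  then have "1 \<le> real (degree V E u)" and "1 \<le> real (degree V E w)"
    using degree_pos_if_edge[OF assms] \<open>E u w\<close> by (simp_all add: Suc_le_eq)
  then show ?thesis
    by (simp add: abc_matrix_def)
qed (simp add: abc_matrix_def)

lemma abc_weighted_row_sum:
  assumes "simple_graph V E" and "0 < degree V E u"
  shows "(\<Sum>w\<in>V. (abc_matrix V E u w)\<^sup>2 * degree V E w)
       = real (degree V E u) - 2 + (\<Sum>w\<in>{w \<in> V. E u w}. real (degree V E w)) / degree V E u"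
proof -
  define d where "d v = real (degree V E v)" for v
  define N where "N = {w \<in> V. E u w}"
  have "finite V"
    using assms(1) by (simp add: simple_graph_def)
  have "(abc_matrix V E u w)\<^sup>2 * d w = (d u - 2) / d u + d w / d u" if "E u w" for w
  proof -
    have "E w u"
      using assms(1) \<open>E u w\<close> by (simp add: simple_graph_def)
    then have "1 \<le> d u" and "1 \<le> d w"
      using degree_pos_if_edge[OF assms(1)] \<open>E u w\<close> by (simp_all add: d_def Suc_le_eq)
    then show ?thesis
      using \<open>E u w\<close> by (simp add: abc_matrix_def d_def[symmetric] field_simps)
  qed
  then have "(\<Sum>w\<in>V. (abc_matrix V E u w)\<^sup>2 * d w)
      = (\<Sum>w\<in>V. if E u w then (d u - 2) / d u + d w / d u else 0)"
    by (intro sum.cong) (auto simp: abc_matrix_def)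
  also have "\<dots> = (\<Sum>w\<in>N. (d u - 2) / d u + d w / d u)"
    using \<open>finite V\<close> by (simp add: N_def sum.inter_filter)
  also have "\<dots> = card N * ((d u - 2) / d u) + (\<Sum>w\<in>N. d w) / d u"
    by (simp add: sum.distrib sum_divide_distrib)
  also have "card N = d u"
    by (simp add: N_def d_def degree_def)
  finally show ?thesis
    using assms(2) by (simp add: N_def d_def)
qed

lemma add_divide_le_add_divide:
  fixes d D t P :: real
  assumes "0 < d" and "d \<le> D" and "t \<le> P" and "t \<le> d * D"
  shows "d + t / d \<le> D + P / D"
proof -
  have "d * d * D + t * D \<le> d * D * D + P * d"
  proof (cases "d * D \<le> P")
    case True
    have "t * D \<le> d * D * D"
      using assms by (simp add: mult_right_mono)
    moreover have "d * d * D \<le> P * d"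
      using mult_right_mono[OF True, of d] assms(1) by (simp add: mult_ac)
    ultimately show ?thesis
      by linarith
  next
    case False
    have "t * D \<le> P * D"
      using assms by (simp add: mult_right_mono)
    moreover have "P * (D - d) \<le> d * D * (D - d)"
      using False assms(2) by (intro mult_right_mono) auto
    ultimately show ?thesis
      by (simp add: algebra_simps)
  qed
  then show ?thesis
    using assms(1,2) by (simp add: field_simps)
qed

lemma abc_weighted_row_sum_le:
  assumes "simple_graph V E" and "connected_graph V E" and "card V \<ge> 2" and "u \<in> V"
  shows "(\<Sum>w\<in>V. (abc_matrix V E u w)\<^sup>2 * degree V E w)
       \<le> real (max_degree V E) + (2 * real (num_edges E) - real (card V) + 1) / real (max_degree V E) - 2"
proof -
  define N where "N = {w \<in> V. E u w}"
  define t where "t = (\<Sum>w\<in>N. real (degree V E w))"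
  have "0 < degree V E u"
    by (rule connected_degree_pos[OF assms])
  moreover have "degree V E u \<le> max_degree V E"
    by (rule degree_le_max_degree[OF assms(1,4)])
  moreover have "t \<le> 2 * real (num_edges E) - real (card V) + 1"
  proof -
    have "real ((\<Sum>w\<in>N. degree V E w) + card V) \<le> real (2 * num_edges E + 1)"
      unfolding N_def using neighbour_degree_sum_le[OF assms] by (simp only: of_nat_le_iff)
    then show ?thesis
      by (simp add: t_def)
  qed
  moreover have "t \<le> real (degree V E u) * real (max_degree V E)"
  proof -
    have "t \<le> (\<Sum>w\<in>N. real (max_degree V E))"
      unfolding t_def N_def using degree_le_max_degree[OF assms(1)] by (intro sum_mono) auto
    also have "\<dots> = real (degree V E u) * real (max_degree V E)"
      by (simp add: N_def degree_def)
    finally show ?thesis .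
  qed
  ultimately have "real (degree V E u) + t / degree V E u
      \<le> real (max_degree V E) + (2 * real (num_edges E) - real (card V) + 1) / real (max_degree V E)"
    by (intro add_divide_le_add_divide) simp_all
  then show ?thesis
    unfolding abc_weighted_row_sum[OF assms(1) \<open>0 < degree V E u\<close>] t_def N_def by linarith
qed

lemma abc_spectral_radius_is_eigenvalue:
  assumes "simple_graph V E"
  shows "is_eigenvalue V (abc_matrix V E) (abc_spectral_radius V E)"
proof -
  have "finite V" and "V \<noteq> {}"
    using assms by (auto simp: simple_graph_def)
  have sym: "\<And>u w. u \<in> V \<Longrightarrow> w \<in> V \<Longrightarrow> abc_matrix V E u w = abc_matrix V E w u"
    using abc_matrix_symmetric[OF assms] by blast
  have "finite {mu. is_eigenvalue V (abc_matrix V E) mu}"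
    and "{mu. is_eigenvalue V (abc_matrix V E) mu} \<noteq> {}"
    using symmetric_eigenvalues_finite[OF \<open>finite V\<close> sym]
      symmetric_eigenvalue_exists[OF \<open>finite V\<close> \<open>V \<noteq> {}\<close> sym] by auto
  then show ?thesis
    unfolding abc_spectral_radius_def using Max_in by blast
qed

lemma abc_eigenvalue_le:
  assumes "simple_graph V E" and "connected_graph V E" and "card V \<ge> 2"
    and "is_eigenvalue V (abc_matrix V E) mu"
  shows "mu \<le> sqrt (real (max_degree V E)
    + (2 * real (num_edges E) - real (card V) + 1) / real (max_degree V E) - 2)"
proof (rule eigenvalue_le_sqrt_weighted_row_bound[OF _ _ _ _ _ assms(4)])
  show "finite V"
    using assms(1) by (simp add: simple_graph_def)
  show "0 \<le> abc_matrix V E u w" for u w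
    by (rule abc_matrix_nonneg[OF assms(1)])
  show "0 < real (degree V E w)" if "w \<in> V" for w
    using connected_degree_pos[OF assms(1-3) that] by simp
  show "real (card {u \<in> V. abc_matrix V E u w \<noteq> 0}) \<le> real (degree V E w)" for w
    using \<open>finite V\<close> assms(1)
    by (auto simp: degree_def abc_matrix_def simple_graph_def intro!: card_mono)
qed (rule abc_weighted_row_sum_le[OF assms(1-3)])

theorem corollary2p3:
  fixes V :: "'a set" and E :: "'a \<Rightarrow> 'a \<Rightarrow> bool"
  assumes "simple_graph V E" and "connected_graph V E" and "card V \<ge> 2"
  defines "n \<equiv> card V" and "m \<equiv> num_edges E" and "\<Delta> \<equiv> max_degree V E"
  defines "k \<equiv> \<lceil>(2 * real m - real n + 1) / real \<Delta>\<rceil>"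
  shows "abc_spectral_radius V E \<le> sqrt (real \<Delta> + real_of_int k - 2)"
proof -
  have "abc_spectral_radius V E \<le> sqrt (real \<Delta> + (2 * real m - real n + 1) / real \<Delta> - 2)"
    unfolding \<Delta>_def m_def n_def
    using abc_eigenvalue_le[OF assms(1-3) abc_spectral_radius_is_eigenvalue[OF assms(1)]] .
  also have "\<dots> \<le> sqrt (real \<Delta> + real_of_int k - 2)"
    unfolding k_def by simp
  finally show ?thesis .
qed

end
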